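(* Let $M,N\ge1$, let $T_1,\dots,T_N\in\mathcal{L}(\ell^\infty_M,\mathbb{R})$, let $\mathscr{T}=\{T_n:1\le n\le N\}$, and let $A:\ell^\infty_M\to\ell^\infty_N$ be given by $Ax=(T_nx)_{n=1}^N$. Then $\mathcal{R}^2(\mathscr{T})=\pi_2(A)$.
   Context: $\ell^\infty_M$ is $\mathbb{R}^M$ with max norm, viewed as a Banach lattice with coordinatewise order. The $\ell^2$-bound $\mathcal{R}^2(\mathscr{T})$ is the least $C$ such that $\|(\sum_{i=1}^k|S_ix_i|^2)^{1/2}\|\le C\|(\sum_{i=1}^k|x_i|^2)^{1/2}\|$ for all $k$, all $S_1,\dots,S_k\in\mathscr{T}$ (not necessarily distinct) and all $x_1,\dots,x_k$. For $A\in\mathcal{L}(X,Y)$, $\pi_2(A)$ (the 2-summing norm) is the least $C$ such that $(\sum_{n=1}^k\|Ax_n\|^2)^{1/2}\le C\sup\{(\sum_{n=1}^k|\langle x_n,x^*\rangle|^2)^{1/2}:\|x^*\|_{X^*}\le1\}$ for all $k$ and $x_1,\dots,x_k\in X$. *)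

theory Defs
  imports Complex_Main
begin

text \<open>The space l-infinity over a finite index type 'm (M = CARD('m) >= 1):
  vectors are functions 'm => real with the max norm.\<close>

definition linf_norm :: "('m::finite \<Rightarrow> real) \<Rightarrow> real" where
  "linf_norm x = Max (range (\<lambda>j. \<bar>x j\<bar>))"

definition lin_functional :: "(('m::finite \<Rightarrow> real) \<Rightarrow> real) \<Rightarrow> bool" where
  "lin_functional T \<longleftrightarrow>
     (\<forall>x y. T (\<lambda>j. x j + y j) = T x + T y) \<and> (\<forall>c x. T (\<lambda>j. c * x j) = c * T x)"

text \<open>The l^2-bound of a family of operators from l-infinity_M to the Banach lattice R
  (where |.| is the absolute value and the norm is the absolute value).\<close>

definition R2bound :: "(('m::finite \<Rightarrow> real) \<Rightarrow> real) set \<Rightarrow> real" where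
  "R2bound \<T> = Inf {C. \<forall>(k::nat) (S :: nat \<Rightarrow> ('m \<Rightarrow> real) \<Rightarrow> real) (xs :: nat \<Rightarrow> 'm \<Rightarrow> real).
       (\<forall>i<k. S i \<in> \<T>) \<longrightarrow>
       \<bar>sqrt (\<Sum>i<k. \<bar>S i (xs i)\<bar>^2)\<bar> \<le> C * linf_norm (\<lambda>j. sqrt (\<Sum>i<k. \<bar>xs i j\<bar>^2))}"

definition dual_ball :: "(('m::finite \<Rightarrow> real) \<Rightarrow> real) set" where
  "dual_ball = {f. lin_functional f \<and> (\<forall>x. \<bar>f x\<bar> \<le> linf_norm x)}"

definition weak_l2 :: "nat \<Rightarrow> (nat \<Rightarrow> 'm::finite \<Rightarrow> real) \<Rightarrow> real" where
  "weak_l2 k xs = Sup ((\<lambda>f. sqrt (\<Sum>n<k. \<bar>f (xs n)\<bar>^2)) ` dual_ball)"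

definition pi2 :: "(('m::finite \<Rightarrow> real) \<Rightarrow> ('n::finite \<Rightarrow> real)) \<Rightarrow> real" where
  "pi2 A = Inf {C. \<forall>(k::nat) (xs :: nat \<Rightarrow> 'm \<Rightarrow> real).
       sqrt (\<Sum>n<k. (linf_norm (A (xs n)))^2) \<le> C * weak_l2 k xs}"

end

theory Submission
  imports Defs "HOL-Analysis.L2_Norm"
begin

text \<open>The defining conditions of the two infima coincide for every constant C.
  On the left-hand sides, the largest \<open>\<ell>\<^sup>2\<close>-sum \<open>(\<Sum>\<^sub>i \<bar>S\<^sub>i x\<^sub>i\<bar>\<^sup>2)\<^sup>1\<^sup>/\<^sup>2\<close>
  over choices \<open>S\<^sub>i \<in> \<T>\<close> is reached by letting each \<open>S\<^sub>i\<close> be a functional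
  of the family that attains \<open>\<parallel>A x\<^sub>i\<parallel>\<^sub>\<infinity>\<close>.
  On the right-hand sides, the weak \<open>\<ell>\<^sup>2\<close>-norm of \<open>x\<^sub>1, \<dots>, x\<^sub>k\<close> in
  \<open>\<ell>\<^sup>\<infinity>\<^sub>M\<close> is the sup-norm of the column norms
  \<open>(\<Sum>\<^sub>i \<bar>x\<^sub>i j\<bar>\<^sup>2)\<^sup>1\<^sup>/\<^sup>2\<close>: point evaluations lie in the dual
  ball, and conversely Cauchy--Schwarz bounds every dual functional.\<close>

lemma abs_le_linf_norm: "\<bar>x j\<bar> \<le> linf_norm x"
  unfolding linf_norm_def by (rule Max_ge) auto

lemma linf_norm_attained: "\<exists>j. linf_norm x = \<bar>x j\<bar>"
proof -
  have "linf_norm x \<in> range (\<lambda>j. \<bar>x j\<bar>)"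
    unfolding linf_norm_def by (rule Max_in) auto
  then show ?thesis by auto
qed

lemma linf_norm_le: "(\<And>j. \<bar>x j\<bar> \<le> c) \<Longrightarrow> linf_norm x \<le> c"
  unfolding linf_norm_def by (subst Max_le_iff) auto

lemma linf_norm_nonneg: "0 \<le> linf_norm x"
  using abs_le_linf_norm[of x] abs_ge_zero order_trans by blast

lemma lin_functional_sum:
  fixes k :: nat
  assumes "lin_functional f"
  shows "f (\<lambda>j. \<Sum>n<k. c n * x n j) = (\<Sum>n<k. c n * f (x n))"
proof (induction k)
  case 0
  have "f (\<lambda>j. 0 * x 0 j) = 0 * f (x 0)"
    using assms unfolding lin_functional_def by blast
  then show ?case by simp
next
  case (Suc k)
  have add: "f (\<lambda>j. y j + z j) = f y + f z" for y z
    using assms unfolding lin_functional_def by blast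
  have "f (\<lambda>j. c k * x k j) = c k * f (x k)"
    using assms unfolding lin_functional_def by blast
  then show ?case
    using Suc add[of "\<lambda>j. \<Sum>n<k. c n * x n j" "\<lambda>j. c k * x k j"] by simp
qed

lemma coordinate_in_dual_ball: "(\<lambda>x. x j) \<in> dual_ball"
  unfolding dual_ball_def lin_functional_def using abs_le_linf_norm by auto

lemma dual_ball_l2_le:
  fixes k :: nat
  assumes "f \<in> dual_ball"
  shows "sqrt (\<Sum>n<k. \<bar>f (xs n)\<bar>^2) \<le> linf_norm (\<lambda>j. sqrt (\<Sum>i<k. \<bar>xs i j\<bar>^2))"
    (is "?s \<le> ?L")
proof -
  have lin: "lin_functional f" and norm: "\<And>x. \<bar>f x\<bar> \<le> linf_norm x"
    using assms unfolding dual_ball_def by auto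
  define c where "c n = f (xs n)" for n
  have s: "?s = L2_set c {..<k}"
    unfolding L2_set_def c_def by simp
  have "?s^2 = (\<Sum>n<k. c n * f (xs n))"
    unfolding c_def by (simp add: power2_eq_square sum_nonneg)
  also have "\<dots> = f (\<lambda>j. \<Sum>n<k. c n * xs n j)"
    by (rule lin_functional_sum[OF lin, symmetric])
  also have "\<dots> \<le> linf_norm (\<lambda>j. \<Sum>n<k. c n * xs n j)"
    using norm by (rule abs_le_D1)
  also have "\<dots> \<le> ?s * ?L"
  proof (rule linf_norm_le)
    fix j
    have "\<bar>\<Sum>n<k. c n * xs n j\<bar> \<le> (\<Sum>n<k. \<bar>c n\<bar> * \<bar>xs n j\<bar>)"
      by (rule order_trans[OF sum_abs]) (simp add: abs_mult)
    also have "\<dots> \<le> L2_set c {..<k} * L2_set (\<lambda>n. xs n j) {..<k}"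
      by (rule L2_set_mult_ineq)
    also have "\<dots> = ?s * sqrt (\<Sum>i<k. \<bar>xs i j\<bar>^2)"
      by (simp add: s L2_set_def c_def)
    also have "\<dots> \<le> ?s * ?L"
      using abs_le_linf_norm[of "\<lambda>j. sqrt (\<Sum>i<k. \<bar>xs i j\<bar>^2)" j]
      by (intro mult_left_mono) (auto simp: sum_nonneg)
    finally show "\<bar>\<Sum>n<k. c n * xs n j\<bar> \<le> ?s * ?L" .
  qed
  finally have "?s * ?s \<le> ?s * ?L"
    by (simp add: power2_eq_square)
  moreover have cancel: "a \<le> b" if "a * a \<le> a * b" "0 \<le> a" "0 \<le> b" for a b :: real
    using that by (metis le_less mult_le_cancel_left_pos)
  ultimately show ?thesis
    by (rule cancel) (simp_all add: sum_nonneg linf_norm_nonneg)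
qed

lemma weak_l2_eq_linf_norm_l2:
  "weak_l2 k xs = linf_norm (\<lambda>j. sqrt (\<Sum>i<k. \<bar>xs i j\<bar>^2))"
  unfolding weak_l2_def
proof (rule cSup_eq_maximum)
  obtain j where "linf_norm (\<lambda>j. sqrt (\<Sum>i<k. \<bar>xs i j\<bar>^2)) = \<bar>sqrt (\<Sum>i<k. \<bar>xs i j\<bar>^2)\<bar>"
    using linf_norm_attained by blast
  then show "linf_norm (\<lambda>j. sqrt (\<Sum>i<k. \<bar>xs i j\<bar>^2))
      \<in> (\<lambda>f. sqrt (\<Sum>n<k. \<bar>f (xs n)\<bar>^2)) ` dual_ball"
    using coordinate_in_dual_ball
    by (intro image_eqI[of _ _ "\<lambda>x. x j"]) (auto simp: sum_nonneg)
qed (use dual_ball_l2_le in auto)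

lemma selection_l2_le_iff:
  fixes T :: "'n::finite \<Rightarrow> 'a \<Rightarrow> real" and k :: nat
  shows "(\<forall>S. (\<forall>i<k. S i \<in> range T) \<longrightarrow> sqrt (\<Sum>i<k. \<bar>S i (xs i)\<bar>^2) \<le> B)
    \<longleftrightarrow> sqrt (\<Sum>i<k. (linf_norm (\<lambda>n. T n (xs i)))^2) \<le> B"
proof
  assume all: "\<forall>S. (\<forall>i<k. S i \<in> range T) \<longrightarrow> sqrt (\<Sum>i<k. \<bar>S i (xs i)\<bar>^2) \<le> B"
  obtain ns where "\<forall>i. linf_norm (\<lambda>n. T n (xs i)) = \<bar>T (ns i) (xs i)\<bar>"
    using choice[of "\<lambda>i n. linf_norm (\<lambda>n. T n (xs i)) = \<bar>T n (xs i)\<bar>"] linf_norm_attained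
    by blast
  then show "sqrt (\<Sum>i<k. (linf_norm (\<lambda>n. T n (xs i)))^2) \<le> B"
    using all[rule_format, of "\<lambda>i. T (ns i)"] by simp
next
  assume max: "sqrt (\<Sum>i<k. (linf_norm (\<lambda>n. T n (xs i)))^2) \<le> B"
  show "\<forall>S. (\<forall>i<k. S i \<in> range T) \<longrightarrow> sqrt (\<Sum>i<k. \<bar>S i (xs i)\<bar>^2) \<le> B"
  proof (intro allI impI)
    fix S assume S: "\<forall>i<k. S i \<in> range T"
    have "\<bar>S i (xs i)\<bar>^2 \<le> (linf_norm (\<lambda>n. T n (xs i)))^2" if "i < k" for i
    proof -
      obtain n where "S i = T n"
        using S \<open>i < k\<close> by auto
      then show ?thesis
        using abs_le_linf_norm[of "\<lambda>n. T n (xs i)" n] by (metis abs_ge_zero power_mono)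
    qed
    then have "sqrt (\<Sum>i<k. \<bar>S i (xs i)\<bar>^2) \<le> sqrt (\<Sum>i<k. (linf_norm (\<lambda>n. T n (xs i)))^2)"
      by (auto intro!: sum_mono)
    then show "sqrt (\<Sum>i<k. \<bar>S i (xs i)\<bar>^2) \<le> B"
      using max by linarith
  qed
qed

theorem mainTheorem12:
  fixes T :: "'n::finite \<Rightarrow> ('m::finite \<Rightarrow> real) \<Rightarrow> real"
  assumes "\<And>n. lin_functional (T n)"
  shows "R2bound (range T) = pi2 (\<lambda>x. \<lambda>n. T n x)"
proof -
  have key: "(\<forall>S. (\<forall>i<k. S i \<in> range T) \<longrightarrow>
          \<bar>sqrt (\<Sum>i<k. \<bar>S i (xs i)\<bar>^2)\<bar> \<le> C * linf_norm (\<lambda>j. sqrt (\<Sum>i<k. \<bar>xs i j\<bar>^2)))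
    \<longleftrightarrow> sqrt (\<Sum>i<k. (linf_norm (\<lambda>n. T n (xs i)))^2) \<le> C * weak_l2 k xs"
    for C k and xs :: "nat \<Rightarrow> 'm \<Rightarrow> real"
    using selection_l2_le_iff[of k T xs] by (simp add: weak_l2_eq_linf_norm_l2 sum_nonneg)
  show ?thesis
    unfolding R2bound_def pi2_def
    by (intro arg_cong[where f = Inf] Collect_cong iff_allI) (subst all_comm, rule iff_allI, rule key)
qed

end
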